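(* Let $K$ be a field, let $I_1\subseteq S_1=K[x_1,\ldots,x_m]$ and $I_2\subseteq S_2=K[y_1,\ldots,y_n]$ be monomial ideals, let $S=S_1\otimes_K S_2=K[x_1,\ldots,x_m,y_1,\ldots,y_n]$, and let $I=(I_1,I_2)S$. Assume that $I_1$, $I_2$ and $I$ all satisfy the Ratliff condition. Regard $\mathrm{Soc}(I_1)$, $\mathrm{Soc}(I_2)$ and $\mathrm{Soc}(I)$ as ideals of $\mathrm{gr}_{I_1}(S_1)$, $\mathrm{gr}_{I_2}(S_2)$ and $\mathrm{gr}_I(S)$ respectively, and extend $\mathrm{Soc}(I_1)$, $\mathrm{Soc}(I_2)$ to ideals of $\mathrm{gr}_I(S)$ via the canonical injective maps $\mathrm{gr}_{I_i}(S_i)\to\mathrm{gr}_I(S)$. Then $\mathrm{Soc}(I)=\mathrm{Soc}(I_1)\,\mathrm{Soc}(I_2)$ (product of ideals in $\mathrm{gr}_I(S)$); equivalently, under the canonical isomorphism $\alpha:\mathrm{gr}_{I_1}(S_1)\otimes_K\mathrm{gr}_{I_2}(S_2)\to\mathrm{gr}_I(S)$, $f\otimes g\mapsto fg$, one has $\alpha(\mathrm{Soc}(I_1)\otimes_K\mathrm{Soc}(I_2))=\mathrm{Soc}(I)$.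
   Context: For an ideal $J$ in a ring $R$ (with maximal graded ideal $\mathfrak{n}$), $\mathrm{gr}_J(R)=\bigoplus_{k\ge0}J^k/J^{k+1}$ and $\mathrm{Soc}(J)=\bigoplus_{k\ge0}(J^k:\mathfrak{n})/J^k$. $J$ satisfies the Ratliff condition if $(J^{k+1}:J)=J^k$ for all $k\ge0$. Under this condition $(J^{k+1}:\mathfrak{n})\subseteq J^k$, so $(J^{k+1}:\mathfrak{n})/J^{k+1}\subseteq J^k/J^{k+1}$, and $\mathrm{Soc}(J)$ is identified with the ideal $(0:_{\mathrm{gr}_J(R)}\mathfrak{n})$ of $\mathrm{gr}_J(R)$, whose elements of degree $k$ are the classes $u+J^{k+1}\in J^k/J^{k+1}$ with $u\in (J^{k+1}:\mathfrak{n})$. Here $\mathfrak{n}$ is the maximal graded ideal of $S_1$, $S_2$ or $S$ respectively. The map $\alpha$ is an isomorphism. *)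

theory Defs
  imports "HOL-Library.Poly_Mapping" "HOL-Algebra.Ideal_Product" "HOL-Algebra.QuotRing"
begin

type_synonym 'k mpol = "(nat \<Rightarrow>\<^sub>0 nat) \<Rightarrow>\<^sub>0 'k"

definition polyring :: "nat set \<Rightarrow> 'k::field mpol set" where
  "polyring V = {p :: 'k mpol. \<forall>a \<in> Poly_Mapping.keys p. Poly_Mapping.keys a \<subseteq> V}"

definition Var :: "nat \<Rightarrow> 'k::field mpol" where
  "Var i = Poly_Mapping.single (Poly_Mapping.single i 1) 1"

definition is_monomial :: "'k::field mpol \<Rightarrow> bool" where
  "is_monomial p \<longleftrightarrow> (\<exists>a. p = Poly_Mapping.single a 1)"

definition ideal_in :: "'a::comm_ring_1 set \<Rightarrow> 'a set \<Rightarrow> 'a set" where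
  "ideal_in R X = {y. \<exists>F r. finite F \<and> F \<subseteq> X \<and> (\<forall>x\<in>F. r x \<in> R) \<and> y = (\<Sum>x\<in>F. r x * x)}"

definition monomial_ideal :: "nat set \<Rightarrow> 'k::field mpol set \<Rightarrow> bool" where
  "monomial_ideal V J \<longleftrightarrow>
     (\<exists>G. G \<subseteq> polyring V \<and> (\<forall>g\<in>G. is_monomial g) \<and> J = ideal_in (polyring V) G)"

primrec ipow :: "'a::comm_ring_1 set \<Rightarrow> 'a set \<Rightarrow> nat \<Rightarrow> 'a set" where
  "ipow R J 0 = R"
| "ipow R J (Suc k) = ideal_in R {a * b | a b. a \<in> ipow R J k \<and> b \<in> J}"

definition colon :: "'a::comm_ring_1 set \<Rightarrow> 'a set \<Rightarrow> 'a set \<Rightarrow> 'a set" where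
  "colon R J L = {u \<in> R. \<forall>v \<in> L. u * v \<in> J}"

definition max_graded :: "nat set \<Rightarrow> 'k::field mpol set" where
  "max_graded V = ideal_in (polyring V) (Var ` V)"

definition ratliff :: "'a::comm_ring_1 set \<Rightarrow> 'a set \<Rightarrow> bool" where
  "ratliff R J \<longleftrightarrow> (\<forall>k. colon R (ipow R J (Suc k)) J = ipow R J k)"

text \<open>The associated graded ring gr_J(R) = direct sum of the J^k/J^{k+1}, constructed as the
  quotient of the ring of finitely supported sequences f with f k \<in> J^k
  (with convolution product) by the ideal of those sequences with f k \<in> J^{k+1}.\<close>
definition seqring :: "'a::comm_ring_1 set \<Rightarrow> 'a set \<Rightarrow> (nat \<Rightarrow> 'a) ring" where
  "seqring R J = \<lparr> carrier = {f. (\<forall>k. f k \<in> ipow R J k) \<and> finite {k. f k \<noteq> 0}},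
                   monoid.mult = (\<lambda>f g k. \<Sum>i\<le>k. f i * g (k - i)),
                   one = (\<lambda>k. if k = 0 then 1 else 0),
                   zero = (\<lambda>k. 0),
                   add = (\<lambda>f g k. f k + g k) \<rparr>"

definition grN :: "'a::comm_ring_1 set \<Rightarrow> 'a set \<Rightarrow> (nat \<Rightarrow> 'a) set" where
  "grN R J = {f \<in> carrier (seqring R J). \<forall>k. f k \<in> ipow R J (Suc k)}"

definition gr :: "'a::comm_ring_1 set \<Rightarrow> 'a set \<Rightarrow> (nat \<Rightarrow> 'a) set ring" where
  "gr R J = seqring R J Quot grN R J"

text \<open>Soc(J) = direct sum of (J^{k+1}:n)/J^{k+1}, as a subset of gr_J(R): classes of sequences
  whose k-th component lies in (J^{k+1}:n) (and in J^k).\<close>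
definition Soc :: "'a::comm_ring_1 set \<Rightarrow> 'a set \<Rightarrow> 'a set \<Rightarrow> (nat \<Rightarrow> 'a) set set" where
  "Soc R n J = {grN R J +>\<^bsub>seqring R J\<^esub> f | f.
                  f \<in> carrier (seqring R J) \<and> (\<forall>k. f k \<in> colon R (ipow R J (Suc k)) n)}"

text \<open>Canonical map gr_{J'}(R') \<rightarrow> gr_J(R) induced by R' \<subseteq> R, J' \<subseteq> J:
  the class of f is sent to the class of f.\<close>
definition gr_map :: "'a::comm_ring_1 set \<Rightarrow> 'a set \<Rightarrow> (nat \<Rightarrow> 'a) set \<Rightarrow> (nat \<Rightarrow> 'a) set" where
  "gr_map R J C = (\<Union>f\<in>C. grN R J +>\<^bsub>seqring R J\<^esub> f)"

end

theory Submission
  imports Defs "HOL-Computational_Algebra.Formal_Power_Series"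
begin

text \<open>
  A monomial ideal and all its powers are determined by exponent vectors: x^a lies in the k-th
  power iff some sum of k generator exponents divides a.  The socle condition (u in I^k and
  u * x_i in I^(k+1) for every variable x_i) can therefore be checked term by term, so Soc(I) is
  spanned by the classes of single terms c x^w of degree k.  Because I1 and I2 live in disjoint
  sets of variables, a generator exponent of I^k dividing w splits as e1 + e2 with e1 from
  I1^alpha, e2 from I2^beta and alpha + beta = k, and w = a + b splits accordingly.  If c x^w is
  not in I^(k+1), then x^b is not in I2^(beta+1), so multiplying by a variable x_i of the first set
  must raise the I1-degree: x^a x_i lies in I1^(alpha+1).  Hence c x^a is a socle element of I1 of
  degree alpha, x^b one of I2 of degree beta, and the term is their product.  Conversely, products
  of socle elements of I1 and I2 are annihilated by the variables of both sets.
\<close>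

section \<open>Ideals of a subring\<close>

definition is_subring :: "'a::comm_ring_1 set \<Rightarrow> bool" where
  "is_subring R \<longleftrightarrow> 0 \<in> R \<and> 1 \<in> R \<and> (\<forall>x\<in>R. - x \<in> R \<and> (\<forall>y\<in>R. x + y \<in> R \<and> x * y \<in> R))"

definition is_ideal :: "'a::comm_ring_1 set \<Rightarrow> 'a set \<Rightarrow> bool" where
  "is_ideal R J \<longleftrightarrow> J \<subseteq> R \<and> 0 \<in> J \<and> (\<forall>x\<in>J. \<forall>y\<in>J. x + y \<in> J) \<and> (\<forall>r\<in>R. \<forall>x\<in>J. r * x \<in> J)"

lemma is_subringD:
  assumes "is_subring R"
  shows subring_zero: "0 \<in> R" and subring_one: "1 \<in> R"
    and subring_uminus: "x \<in> R \<Longrightarrow> - x \<in> R"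
    and subring_add: "x \<in> R \<Longrightarrow> y \<in> R \<Longrightarrow> x + y \<in> R"
    and subring_mult: "x \<in> R \<Longrightarrow> y \<in> R \<Longrightarrow> x * y \<in> R"
  using assms unfolding is_subring_def by blast+

lemma is_idealD:
  assumes "is_ideal R J"
  shows ideal_subset: "J \<subseteq> R" and ideal_zero: "0 \<in> J"
    and ideal_add: "x \<in> J \<Longrightarrow> y \<in> J \<Longrightarrow> x + y \<in> J"
    and ideal_mult_left: "r \<in> R \<Longrightarrow> x \<in> J \<Longrightarrow> r * x \<in> J"
  using assms unfolding is_ideal_def by blast+

lemma is_ideal_sum:
  assumes "is_ideal R J" and "\<And>x. x \<in> F \<Longrightarrow> g x \<in> J"
  shows "sum g F \<in> J"
  using assms(2)
  by (induction F rule: infinite_finite_induct) (use assms(1) in \<open>auto simp: is_ideal_def\<close>)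

lemma ideal_in_subset:
  assumes J: "is_ideal R J" and X: "X \<subseteq> J"
  shows "ideal_in R X \<subseteq> J"
proof
  fix y assume "y \<in> ideal_in R X"
  then obtain F r where "F \<subseteq> X" "\<forall>x\<in>F. r x \<in> R" "y = (\<Sum>x\<in>F. r x * x)"
    unfolding ideal_in_def by blast
  then show "y \<in> J"
    using X J by (auto intro!: is_ideal_sum[OF J] simp: is_ideal_def)
qed

lemma ideal_inI:
  "finite F \<Longrightarrow> F \<subseteq> X \<Longrightarrow> (\<And>x. x \<in> F \<Longrightarrow> r x \<in> R) \<Longrightarrow> (\<Sum>x\<in>F. r x * x) \<in> ideal_in R X"
  unfolding ideal_in_def by blast

lemma ideal_in_mult: "x \<in> X \<Longrightarrow> r \<in> R \<Longrightarrow> r * x \<in> ideal_in R X"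
  unfolding ideal_in_def by (intro CollectI exI[of _ "{x}"] exI[of _ "\<lambda>_. r"]) auto

lemma ideal_in_base: "is_subring R \<Longrightarrow> x \<in> X \<Longrightarrow> x \<in> ideal_in R X"
  using ideal_in_mult[of x X 1 R] by (simp add: is_subring_def)

lemma is_ideal_ideal_in:
  assumes R: "is_subring R" and X: "X \<subseteq> R"
  shows "is_ideal R (ideal_in R X)"
  unfolding is_ideal_def
proof (intro conjI ballI subsetI)
  have RR: "is_ideal R R"
    using R by (simp add: is_ideal_def is_subring_def)
  fix y assume "y \<in> ideal_in R X"
  then obtain F r where F: "F \<subseteq> X" "\<forall>x\<in>F. r x \<in> R" "y = (\<Sum>x\<in>F. r x * x)"
    unfolding ideal_in_def by blast
  have "r x * x \<in> R" if "x \<in> F" for x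
    using R X F that unfolding is_subring_def by blast
  then show "y \<in> R"
    unfolding F(3) by (rule is_ideal_sum[OF RR])
next
  show "0 \<in> ideal_in R X"
    unfolding ideal_in_def by (intro CollectI exI[of _ "{}"]) auto
next
  fix y z assume "y \<in> ideal_in R X" "z \<in> ideal_in R X"
  then obtain F1 r1 F2 r2 where F1: "finite F1" "F1 \<subseteq> X" "\<forall>x\<in>F1. r1 x \<in> R" "y = (\<Sum>x\<in>F1. r1 x * x)"
    and F2: "finite F2" "F2 \<subseteq> X" "\<forall>x\<in>F2. r2 x \<in> R" "z = (\<Sum>x\<in>F2. r2 x * x)"
    unfolding ideal_in_def by blast
  define r where "r x = (if x \<in> F1 then r1 x else 0) + (if x \<in> F2 then r2 x else 0)" for x
  have "(\<Sum>x\<in>F1 \<union> F2. (if x \<in> F1 then r1 x else 0) * x) = y"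
    unfolding F1(4) using F1(1) F2(1) by (intro sum.mono_neutral_cong_right) auto
  moreover have "(\<Sum>x\<in>F1 \<union> F2. (if x \<in> F2 then r2 x else 0) * x) = z"
    unfolding F2(4) using F1(1) F2(1) by (intro sum.mono_neutral_cong_right) auto
  ultimately have "y + z = (\<Sum>x\<in>F1 \<union> F2. r x * x)"
    unfolding r_def distrib_right sum.distrib by simp
  moreover have "r x \<in> R" for x
    using F1(3) F2(3) unfolding r_def by (simp add: subring_add subring_zero R)
  ultimately show "y + z \<in> ideal_in R X"
    using F1 F2 ideal_inI[of "F1 \<union> F2" X r R] by simp
next
  fix s y assume s: "s \<in> R" and "y \<in> ideal_in R X"
  then obtain F r where F: "finite F" "F \<subseteq> X" "\<forall>x\<in>F. r x \<in> R" "y = (\<Sum>x\<in>F. r x * x)"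
    unfolding ideal_in_def by blast
  then have "s * y = (\<Sum>x\<in>F. (s * r x) * x)"
    by (simp add: sum_distrib_left mult.assoc)
  moreover have "\<forall>x\<in>F. s * r x \<in> R"
    using R F(3) s by (simp add: is_subring_def)
  ultimately show "s * y \<in> ideal_in R X"
    using F(1,2) ideal_inI[of F X "\<lambda>x. s * r x" R] by simp
qed

lemma is_ideal_colon:
  assumes R: "is_subring R" and L: "is_ideal R L"
  shows "is_ideal R (colon R L X)"
  unfolding is_ideal_def
proof (intro conjI ballI subsetI)
  show "0 \<in> colon R L X"
    unfolding colon_def using subring_zero[OF R] ideal_zero[OF L] by simp
  fix u assume u: "u \<in> colon R L X"
  then show "u \<in> R"
    unfolding colon_def by simp
  show "u' \<in> colon R L X \<Longrightarrow> u + u' \<in> colon R L X" for u'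
    using u unfolding colon_def by (simp add: subring_add[OF R] ideal_add[OF L] distrib_right)
  show "r \<in> R \<Longrightarrow> r * u \<in> colon R L X" for r
    using u unfolding colon_def by (simp add: subring_mult[OF R] ideal_mult_left[OF L] mult.assoc)
qed

lemma colon_ideal_in:
  assumes R: "is_subring R" and L: "is_ideal R L" and X: "X \<subseteq> R"
  shows "colon R L (ideal_in R X) = colon R L X"
proof
  show "colon R L (ideal_in R X) \<subseteq> colon R L X"
    using ideal_in_base[OF R] unfolding colon_def by blast
next
  show "colon R L X \<subseteq> colon R L (ideal_in R X)"
  proof
    fix u assume u: "u \<in> colon R L X"
    have "ideal_in R X \<subseteq> colon R L {u}"
      by (rule ideal_in_subset[OF is_ideal_colon[OF R L]])
        (use u X in \<open>auto simp: colon_def mult.commute\<close>)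
    then show "u \<in> colon R L (ideal_in R X)"
      using u unfolding colon_def by (auto simp: mult.commute)
  qed
qed

lemma poly_mapping_sum_single:
  "p = (\<Sum>a\<in>Poly_Mapping.keys p. Poly_Mapping.single a (Poly_Mapping.lookup p a))"
  by (intro poly_mapping_eqI) (simp add: lookup_sum lookup_single when_def in_keys_iff)

lemma keys_add_nat:
  "Poly_Mapping.keys (a + b) = Poly_Mapping.keys a \<union> Poly_Mapping.keys (b :: 'a \<Rightarrow>\<^sub>0 nat)"
  by (auto simp: in_keys_iff lookup_add)

lemma lookup_le_add: "Poly_Mapping.lookup a \<le> Poly_Mapping.lookup (a + b :: 'a \<Rightarrow>\<^sub>0 nat)"
  by (simp add: le_fun_def lookup_add)

lemma lookup_add_mono:
  "Poly_Mapping.lookup a \<le> Poly_Mapping.lookup b \<Longrightarrow> Poly_Mapping.lookup c \<le> Poly_Mapping.lookup d \<Longrightarrow>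
    Poly_Mapping.lookup (a + c) \<le> Poly_Mapping.lookup (b + d :: 'a \<Rightarrow>\<^sub>0 nat)"
  by (simp add: le_fun_def lookup_add add_mono)

lemma keys_mono_lookup_le:
  "Poly_Mapping.lookup e \<le> Poly_Mapping.lookup a \<Longrightarrow>
    Poly_Mapping.keys e \<subseteq> Poly_Mapping.keys (a :: 'a \<Rightarrow>\<^sub>0 nat)"
  by (metis in_keys_iff le_fun_def le_zero_eq subsetI)

lemma poly_mapping_split_keys:
  fixes w :: "'a \<Rightarrow>\<^sub>0 'b::comm_monoid_add"
  assumes "Poly_Mapping.keys w \<subseteq> X \<union> Y"
  obtains a b where "w = a + b" and "Poly_Mapping.keys a \<subseteq> X" and "Poly_Mapping.keys b \<subseteq> Y"
proof
  define a where "a = Poly_Mapping.mapp (\<lambda>i c. c when i \<in> X) w"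
  define b where "b = Poly_Mapping.mapp (\<lambda>i c. c when i \<notin> X) w"
  show "w = a + b"
    by (rule poly_mapping_eqI) (simp add: a_def b_def lookup_add lookup_mapp when_def in_keys_iff)
  show "Poly_Mapping.keys a \<subseteq> X"
    by (auto simp: a_def in_keys_iff lookup_mapp when_def split: if_splits)
  show "Poly_Mapping.keys b \<subseteq> Y"
    using assms by (auto simp: b_def in_keys_iff lookup_mapp when_def split: if_splits)
qed

lemma lookup_le_split:
  fixes e1 e2 a b :: "'a \<Rightarrow>\<^sub>0 nat"
  assumes "X \<inter> Y = {}"
    and "Poly_Mapping.keys e1 \<subseteq> X" "Poly_Mapping.keys a \<subseteq> X"
    and "Poly_Mapping.keys e2 \<subseteq> Y" "Poly_Mapping.keys b \<subseteq> Y"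
    and le: "Poly_Mapping.lookup (e1 + e2) \<le> Poly_Mapping.lookup (a + b)"
  shows "Poly_Mapping.lookup e1 \<le> Poly_Mapping.lookup a \<and> Poly_Mapping.lookup e2 \<le> Poly_Mapping.lookup b"
proof -
  have "Poly_Mapping.lookup e1 i \<le> Poly_Mapping.lookup a i \<and>
      Poly_Mapping.lookup e2 i \<le> Poly_Mapping.lookup b i"
    for i
  proof (cases "i \<in> X")
    case True
    then have "i \<notin> Poly_Mapping.keys e2" "i \<notin> Poly_Mapping.keys b"
      using assms(1,4,5) by auto
    then show ?thesis
      using le_funD[OF le, of i] by (simp add: lookup_add in_keys_iff)
  next
    case False
    then have "i \<notin> Poly_Mapping.keys e1" "i \<notin> Poly_Mapping.keys a"
      using assms(2,3) by auto
    then show ?thesis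
      using le_funD[OF le, of i] by (simp add: lookup_add in_keys_iff)
  qed
  then show ?thesis
    by (simp add: le_fun_def)
qed

lemma lookup_mult_single_add:
  "Poly_Mapping.lookup (p * Poly_Mapping.single e (1::'a::comm_semiring_1)) (w + e) =
    Poly_Mapping.lookup p (w::'b::cancel_comm_monoid_add)"
proof -
  have "p * Poly_Mapping.single e 1 =
      (\<Sum>a\<in>Poly_Mapping.keys p. Poly_Mapping.single (a + e) (Poly_Mapping.lookup p a))"
    by (subst poly_mapping_sum_single[of p]) (simp add: sum_distrib_right mult_single)
  then have "Poly_Mapping.lookup (p * Poly_Mapping.single e 1) (w + e) =
      (\<Sum>a\<in>Poly_Mapping.keys p. if a = w then Poly_Mapping.lookup p a else 0)"
    by (simp add: lookup_sum lookup_single when_def)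
  also have "\<dots> = Poly_Mapping.lookup p w"
    by (simp add: sum.delta' in_keys_iff)
  finally show ?thesis .
qed

section \<open>The associated graded ring\<close>

lemma seqring_simps:
  "carrier (seqring R J) = {f. (\<forall>k. f k \<in> ipow R J k) \<and> finite {k. f k \<noteq> 0}}"
  "f \<otimes>\<^bsub>seqring R J\<^esub> g = (\<lambda>k. \<Sum>i\<le>k. f i * g (k - i))"
  "f \<oplus>\<^bsub>seqring R J\<^esub> g = (\<lambda>k. f k + g k)"
  "\<zero>\<^bsub>seqring R J\<^esub> = (\<lambda>k. 0)"
  "\<one>\<^bsub>seqring R J\<^esub> = (\<lambda>k. if k = 0 then 1 else 0)"
  by (simp_all add: seqring_def)

lemma convolution_eq_fps_nth: "(\<lambda>k. \<Sum>i\<le>k. f i * g (k - i)) = fps_nth (Abs_fps f * Abs_fps g)"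
  by (simp add: fun_eq_iff fps_mult_nth atLeast0AtMost)

lemma convolution_support_finite:
  fixes f g :: "nat \<Rightarrow> 'a::comm_semiring_0"
  assumes "finite {k. f k \<noteq> 0}" and "finite {k. g k \<noteq> 0}"
  shows "finite {k. (\<Sum>i\<le>k. f i * g (k - i)) \<noteq> 0}"
proof -
  obtain M N where M: "\<forall>k\<in>{k. f k \<noteq> 0}. k < M" and N: "\<forall>k\<in>{k. g k \<noteq> 0}. k < N"
    using assms unfolding finite_nat_set_iff_bounded by blast
  have "(\<Sum>i\<le>k. f i * g (k - i)) = 0" if k: "M + N \<le> k" for k
  proof (rule sum.neutral, rule ballI)
    fix i assume "i \<in> {..k}"
    show "f i * g (k - i) = 0"
    proof (cases "i < M")
      case True
      then have "\<not> k - i < N"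
        using k by linarith
      then have "g (k - i) = 0"
        using N by blast
      then show ?thesis
        by simp
    next
      case False
      then have "f i = 0"
        using M by blast
      then show ?thesis
        by simp
    qed
  qed
  then have "{k. (\<Sum>i\<le>k. f i * g (k - i)) \<noteq> 0} \<subseteq> {..<M + N}"
    using not_less by blast
  then show ?thesis
    by (rule finite_subset) simp
qed

definition seq_at :: "nat \<Rightarrow> 'a::zero \<Rightarrow> nat \<Rightarrow> 'a" where
  "seq_at k x = (\<lambda>j. if j = k then x else 0)"

lemma seq_at_mult: "seq_at i x \<otimes>\<^bsub>seqring R J\<^esub> seq_at j y = seq_at (i + j) (x * y)"
proof -
  have "(\<Sum>l\<le>m. seq_at i x l * seq_at j y (m - l)) = seq_at (i + j) (x * y) m" for m
  proof -
    have "(\<Sum>l\<le>m. seq_at i x l * seq_at j y (m - l)) =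
        (\<Sum>l\<le>m. if l = i then x * seq_at j y (m - i) else 0)"
      by (rule sum.cong) (auto simp: seq_at_def)
    also have "\<dots> = seq_at (i + j) (x * y) m"
      by (auto simp: seq_at_def)
    finally show ?thesis .
  qed
  then show ?thesis
    by (simp add: seqring_simps fun_eq_iff)
qed

lemma pointwise_sum_closed:
  assumes "P (\<lambda>k. 0)" and "\<And>g h. P g \<Longrightarrow> P h \<Longrightarrow> P (\<lambda>k. g k + h k)" and "\<And>x. x \<in> F \<Longrightarrow> P (u x)"
  shows "P (\<lambda>k. \<Sum>x\<in>F. u x k)"
  using assms(3) by (induction F rule: infinite_finite_induct) (simp_all add: assms(1,2))

lemma finite_support_seq_induct:
  fixes f :: "nat \<Rightarrow> ('a \<Rightarrow>\<^sub>0 'b::comm_monoid_add)"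
  assumes "finite {k. f k \<noteq> 0}" and zero: "P (\<lambda>k. 0)" and add: "\<And>g h. P g \<Longrightarrow> P h \<Longrightarrow> P (\<lambda>k. g k + h k)"
    and atom: "\<And>k a. a \<in> Poly_Mapping.keys (f k) \<Longrightarrow>
      P (seq_at k (Poly_Mapping.single a (Poly_Mapping.lookup (f k) a)))"
  shows "P f"
proof -
  have "P (seq_at k (f k))" for k
  proof -
    have "seq_at k (f k) =
        (\<lambda>j. \<Sum>a\<in>Poly_Mapping.keys (f k).
          seq_at k (Poly_Mapping.single a (Poly_Mapping.lookup (f k) a)) j)"
      by (auto simp: seq_at_def fun_eq_iff simp flip: poly_mapping_sum_single)
    then show ?thesis
      by (simp add: pointwise_sum_closed[of P, OF zero add atom])
  qed
  moreover have "f = (\<lambda>j. \<Sum>k\<in>{k. f k \<noteq> 0}. seq_at k (f k) j)"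
    using assms(1) by (auto simp: seq_at_def fun_eq_iff sum.delta)
  ultimately show ?thesis
    by (metis pointwise_sum_closed[of P, OF zero add])
qed

abbreviation gr_class :: "'a::comm_ring_1 set \<Rightarrow> 'a set \<Rightarrow> (nat \<Rightarrow> 'a) \<Rightarrow> (nat \<Rightarrow> 'a) set" where
  "gr_class R J f \<equiv> grN R J +>\<^bsub>seqring R J\<^esub> f"

definition soc_seqs :: "'a::comm_ring_1 set \<Rightarrow> 'a set \<Rightarrow> 'a set \<Rightarrow> (nat \<Rightarrow> 'a) set" where
  "soc_seqs R n J = {f \<in> carrier (seqring R J). \<forall>k. f k \<in> colon R (ipow R J (Suc k)) n}"

lemma Soc_eq_image: "Soc R n J = gr_class R J ` soc_seqs R n J"
  unfolding Soc_def soc_seqs_def by blast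

declare ipow.simps(2) [simp del]

locale subring_ideal =
  fixes R :: "'a::comm_ring_1 set" and J :: "'a set"
  assumes subring: "is_subring R" and ideal: "is_ideal R J"
begin

lemma ipow_ideal: "is_ideal R (ipow R J k)"
proof (induction k)
  case 0
  show ?case
    using subring unfolding is_ideal_def by (simp add: subring_zero subring_add subring_mult)
next
  case (Suc k)
  have "{a * b | a b. a \<in> ipow R J k \<and> b \<in> J} \<subseteq> R"
    using ideal_subset[OF Suc] ideal_subset[OF ideal] subring_mult[OF subring] by blast
  then show ?case
    unfolding ipow.simps(2) by (rule is_ideal_ideal_in[OF subring])
qed

lemma ipow_subset: "ipow R J k \<subseteq> R"
  by (rule ideal_subset[OF ipow_ideal])

lemma ipow_zero [simp]: "0 \<in> ipow R J k"
  by (rule ideal_zero[OF ipow_ideal])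

lemma ipow_add: "x \<in> ipow R J k \<Longrightarrow> y \<in> ipow R J k \<Longrightarrow> x + y \<in> ipow R J k"
  by (rule ideal_add[OF ipow_ideal])

lemma ipow_mult_left: "r \<in> R \<Longrightarrow> x \<in> ipow R J k \<Longrightarrow> r * x \<in> ipow R J k"
  by (rule ideal_mult_left[OF ipow_ideal])

lemma ipow_uminus: "x \<in> ipow R J k \<Longrightarrow> - x \<in> ipow R J k"
  using ipow_mult_left[of "- 1" x k] subring_uminus[OF subring subring_one[OF subring]] by simp

lemma ipow_sum: "(\<And>i. i \<in> F \<Longrightarrow> g i \<in> ipow R J k) \<Longrightarrow> sum g F \<in> ipow R J k"
  by (rule is_ideal_sum[OF ipow_ideal])

lemma ipow_Suc_subset: "ipow R J (Suc k) \<subseteq> ipow R J k"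
  unfolding ipow.simps(2)
proof (rule ideal_in_subset[OF ipow_ideal], clarify)
  fix a b assume "a \<in> ipow R J k" "b \<in> J"
  then show "a * b \<in> ipow R J k"
    using ipow_mult_left[of b a k] ideal_subset[OF ideal] by (auto simp: mult.commute)
qed

lemma ipow_mult: "x \<in> ipow R J i \<Longrightarrow> y \<in> ipow R J j \<Longrightarrow> x * y \<in> ipow R J (i + j)"
proof (induction j arbitrary: y)
  case 0
  then show ?case
    using ipow_mult_left[of y x i] by (simp add: mult.commute)
next
  case (Suc j)
  have "{a * b | a b. a \<in> ipow R J j \<and> b \<in> J} \<subseteq> colon R (ipow R J (i + Suc j)) {x}"
  proof clarify
    fix a b assume a: "a \<in> ipow R J j" and b: "b \<in> J"
    have "x * a * b \<in> ipow R J (Suc (i + j))"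
      unfolding ipow.simps(2) using Suc.IH[OF Suc.prems(1) a] b
      by (blast intro: ideal_in_base[OF subring])
    moreover have "a * b \<in> R"
      using a b ipow_subset ideal_subset[OF ideal] subring_mult[OF subring] by blast
    ultimately show "a * b \<in> colon R (ipow R J (i + Suc j)) {x}"
      unfolding colon_def by (simp add: ac_simps)
  qed
  then have "ipow R J (Suc j) \<subseteq> colon R (ipow R J (i + Suc j)) {x}"
    unfolding ipow.simps(2) by (rule ideal_in_subset[OF is_ideal_colon[OF subring ipow_ideal]])
  then show ?case
    using Suc.prems(2) unfolding colon_def by (auto simp: mult.commute)
qed

lemma seqring_add_closed:
  assumes "f \<in> carrier (seqring R J)" and "g \<in> carrier (seqring R J)"
  shows "(\<lambda>k. f k + g k) \<in> carrier (seqring R J)"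
proof -
  have "{k. f k + g k \<noteq> 0} \<subseteq> {k. f k \<noteq> 0} \<union> {k. g k \<noteq> 0}"
    by auto
  then show ?thesis
    using assms by (auto simp: seqring_simps ipow_add intro: finite_subset)
qed

lemma seqring_mult_closed:
  assumes f: "f \<in> carrier (seqring R J)" and g: "g \<in> carrier (seqring R J)"
  shows "(\<lambda>k. \<Sum>i\<le>k. f i * g (k - i)) \<in> carrier (seqring R J)"
proof -
  have "f i * g (k - i) \<in> ipow R J k" if "i \<le> k" for i k
    using ipow_mult[of "f i" i "g (k - i)" "k - i"] f g that by (simp add: seqring_simps)
  then show ?thesis
    using f g by (auto simp: seqring_simps intro!: ipow_sum convolution_support_finite)
qed

lemma seqring_cring: "cring (seqring R J)"
proof (rule cringI)
  show "abelian_group (seqring R J)"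
  proof (rule abelian_groupI)
    fix x assume "x \<in> carrier (seqring R J)"
    then have "(\<lambda>k. - x k) \<in> carrier (seqring R J)"
      by (simp add: seqring_simps ipow_uminus)
    then show "\<exists>y\<in>carrier (seqring R J). y \<oplus>\<^bsub>seqring R J\<^esub> x = \<zero>\<^bsub>seqring R J\<^esub>"
      by (force simp: seqring_simps)
  next
    show "x \<oplus>\<^bsub>seqring R J\<^esub> y \<in> carrier (seqring R J)"
      if "x \<in> carrier (seqring R J)" "y \<in> carrier (seqring R J)" for x y
      unfolding seqring_simps(3) by (rule seqring_add_closed[OF that])
  qed (simp_all add: seqring_simps ac_simps)
next
  show "comm_monoid (seqring R J)"
  proof (rule comm_monoidI)
    show "x \<otimes>\<^bsub>seqring R J\<^esub> y \<in> carrier (seqring R J)"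
      if "x \<in> carrier (seqring R J)" "y \<in> carrier (seqring R J)" for x y
      unfolding seqring_simps(2) by (rule seqring_mult_closed[OF that])
    show "\<one>\<^bsub>seqring R J\<^esub> \<in> carrier (seqring R J)"
      using subring_one[OF subring] by (simp add: seqring_simps)
    have "Abs_fps (\<lambda>k. if k = 0 then 1 else 0) = (1 :: 'a fps)"
      by (simp add: fps_eq_iff)
    then show "\<one>\<^bsub>seqring R J\<^esub> \<otimes>\<^bsub>seqring R J\<^esub> x = x" for x
      unfolding seqring_simps convolution_eq_fps_nth[of "\<lambda>k. if k = 0 then 1 else 0"]
      by (simp add: fun_eq_iff)
    show "x \<otimes>\<^bsub>seqring R J\<^esub> y \<otimes>\<^bsub>seqring R J\<^esub> z = x \<otimes>\<^bsub>seqring R J\<^esub> (y \<otimes>\<^bsub>seqring R J\<^esub> z)"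
      for x y z
      by (simp add: seqring_simps convolution_eq_fps_nth fps_nth_inverse mult.assoc)
    show "x \<otimes>\<^bsub>seqring R J\<^esub> y = y \<otimes>\<^bsub>seqring R J\<^esub> x" for x y
      by (simp add: seqring_simps convolution_eq_fps_nth mult.commute)
  qed
next
  show "(x \<oplus>\<^bsub>seqring R J\<^esub> y) \<otimes>\<^bsub>seqring R J\<^esub> z =
      x \<otimes>\<^bsub>seqring R J\<^esub> z \<oplus>\<^bsub>seqring R J\<^esub> y \<otimes>\<^bsub>seqring R J\<^esub> z" for x y z
    by (simp add: seqring_simps distrib_right sum.distrib)
qed

lemma degreewise_ideal:
  assumes Q_subset: "\<And>k. Q k \<subseteq> ipow R J k" and Q_zero: "\<And>k. 0 \<in> Q k"
    and Q_add: "\<And>k x y. x \<in> Q k \<Longrightarrow> y \<in> Q k \<Longrightarrow> x + y \<in> Q k"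
    and Q_mult: "\<And>i j x y. x \<in> Q i \<Longrightarrow> y \<in> ipow R J j \<Longrightarrow> x * y \<in> Q (i + j)"
  shows "ideal {f \<in> carrier (seqring R J). \<forall>k. f k \<in> Q k} (seqring R J)"
    (is "ideal ?H _")
proof -
  interpret cring "seqring R J"
    by (rule seqring_cring)
  have Q_sum: "sum g F \<in> Q k" if "\<And>i. i \<in> F \<Longrightarrow> g i \<in> Q k" for g F k
    using that by (induction F rule: infinite_finite_induct) (auto simp: Q_zero Q_add)
  have H_mult: "a \<otimes>\<^bsub>seqring R J\<^esub> x \<in> ?H" if a: "a \<in> ?H" and x: "x \<in> carrier (seqring R J)" for a x
  proof -
    have "a i * x (k - i) \<in> Q k" if "i \<le> k" for i k
      using Q_mult[of "a i" i "x (k - i)" "k - i"] a x that by (simp add: seqring_simps)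
    then show ?thesis
      using m_closed[of a x] a x by (auto simp: seqring_simps intro!: Q_sum)
  qed
  show ?thesis
  proof (rule idealI)
    show "subgroup ?H (add_monoid (seqring R J))"
    proof (rule add.subgroupI)
      show "?H \<noteq> {}"
        using Q_zero zero_closed by (force simp: seqring_simps)
      show "a \<oplus>\<^bsub>seqring R J\<^esub> b \<in> ?H" if "a \<in> ?H" "b \<in> ?H" for a b
        using that add.m_closed[of a b] by (simp add: seqring_simps Q_add)
      show "\<ominus>\<^bsub>seqring R J\<^esub> a \<in> ?H" if a: "a \<in> ?H" for a
        using H_mult[OF a, of "\<ominus>\<^bsub>seqring R J\<^esub> \<one>\<^bsub>seqring R J\<^esub>"] a
        by (simp add: r_minus)
    qed auto
    show "x \<otimes>\<^bsub>seqring R J\<^esub> a \<in> ?H" if "a \<in> ?H" "x \<in> carrier (seqring R J)" for a x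
      using H_mult[OF that] that m_comm[of a x] by simp
    show "a \<otimes>\<^bsub>seqring R J\<^esub> x \<in> ?H" if "a \<in> ?H" "x \<in> carrier (seqring R J)" for a x
      using H_mult[OF that] .
  qed (rule ring_axioms)
qed

lemma grN_ideal: "ideal (grN R J) (seqring R J)"
  unfolding grN_def
proof (rule degreewise_ideal)
  fix i j x y assume "x \<in> ipow R J (Suc i)" "y \<in> ipow R J j"
  then show "x * y \<in> ipow R J (Suc (i + j))"
    using ipow_mult[of x "Suc i" y j] by simp
qed (use ipow_Suc_subset ipow_add in auto)

lemma gr_ring: "ring (gr R J)"
  unfolding gr_def by (rule ideal.quotient_is_ring[OF grN_ideal])

lemma gr_class_mult:
  "f \<in> carrier (seqring R J) \<Longrightarrow> g \<in> carrier (seqring R J) \<Longrightarrow>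
    gr_class R J f \<otimes>\<^bsub>gr R J\<^esub> gr_class R J g = gr_class R J (f \<otimes>\<^bsub>seqring R J\<^esub> g)"
  unfolding gr_def FactRing_def using ideal.rcoset_mult_add[OF grN_ideal] by simp

lemma gr_class_add:
  "f \<in> carrier (seqring R J) \<Longrightarrow> g \<in> carrier (seqring R J) \<Longrightarrow>
    gr_class R J f \<oplus>\<^bsub>gr R J\<^esub> gr_class R J g = gr_class R J (\<lambda>k. f k + g k)"
  unfolding gr_def FactRing_def using ideal.a_rcos_sum[OF grN_ideal] by (simp add: seqring_simps)

lemma gr_class_eq_zero: "f \<in> grN R J \<Longrightarrow> gr_class R J f = \<zero>\<^bsub>gr R J\<^esub>"
  unfolding gr_def FactRing_def
  by (simp add: ring.a_rcos_zero[OF cring.axioms(1)[OF seqring_cring] grN_ideal])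

lemma Soc_ideal: "ideal (Soc R n J) (gr R J)"
proof -
  have "ideal {f \<in> carrier (seqring R J). \<forall>k. f k \<in> ipow R J k \<inter> colon R (ipow R J (Suc k)) n}
      (seqring R J)"
  proof (rule degreewise_ideal)
    fix i j x y
    assume x: "x \<in> ipow R J i \<inter> colon R (ipow R J (Suc i)) n" and y: "y \<in> ipow R J j"
    have "x * v * y \<in> ipow R J (Suc i + j)" if "v \<in> n" for v
      using x y that by (intro ipow_mult) (auto simp: colon_def)
    then show "x * y \<in> ipow R J (i + j) \<inter> colon R (ipow R J (Suc (i + j))) n"
      using x y ipow_mult[of x i y j] ipow_subset unfolding colon_def by (auto simp: ac_simps)
  qed (use ipow_add in \<open>auto simp: colon_def distrib_right subring_zero[OF subring]
        subring_add[OF subring]\<close>)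
  moreover have "{f \<in> carrier (seqring R J). \<forall>k. f k \<in> ipow R J k \<inter> colon R (ipow R J (Suc k)) n}
      = soc_seqs R n J"
    by (auto simp: soc_seqs_def seqring_simps)
  ultimately show ?thesis
    unfolding Soc_eq_image gr_def
    by (metis ring.ring_ideal_imp_quot_ideal[OF cring.axioms(1)[OF seqring_cring] grN_ideal])
qed

lemma seq_at_in_carrier: "x \<in> ipow R J k \<Longrightarrow> seq_at k x \<in> carrier (seqring R J)"
  by (simp add: seqring_simps seq_at_def)

lemma seq_at_in_grN: "x \<in> ipow R J (Suc k) \<Longrightarrow> seq_at k x \<in> grN R J"
  using seq_at_in_carrier[of x k] ipow_Suc_subset by (auto simp: grN_def seq_at_def)

lemma seq_at_in_soc_seqs:
  "x \<in> ipow R J k \<Longrightarrow> x \<in> colon R (ipow R J (Suc k)) n \<Longrightarrow> seq_at k x \<in> soc_seqs R n J"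
  using seq_at_in_carrier[of x k] subring_zero[OF subring]
  by (auto simp: soc_seqs_def seq_at_def colon_def)

lemma soc_seqs_mult:
  assumes f: "f \<in> soc_seqs R V1 J" and h: "h \<in> soc_seqs R V2 J"
  shows "f \<otimes>\<^bsub>seqring R J\<^esub> h \<in> soc_seqs R (V1 \<union> V2) J"
proof -
  interpret cring "seqring R J"
    by (rule seqring_cring)
  have fh: "f \<in> carrier (seqring R J)" "h \<in> carrier (seqring R J)"
    using f h by (simp_all add: soc_seqs_def)
  then have fh_k: "f i \<in> ipow R J i" "h i \<in> ipow R J i" for i
    by (simp_all add: seqring_simps)
  have prod: "f \<otimes>\<^bsub>seqring R J\<^esub> h \<in> carrier (seqring R J)"
    using fh by simp
  have "f i * h (k - i) * v \<in> ipow R J (Suc k)" if "i \<le> k" "v \<in> V1 \<union> V2" for i k v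
  proof (cases "v \<in> V1")
    case True
    then have "f i * v * h (k - i) \<in> ipow R J (Suc i + (k - i))"
      using f fh_k by (intro ipow_mult) (auto simp: soc_seqs_def colon_def)
    then show ?thesis
      using \<open>i \<le> k\<close> by (simp add: ac_simps)
  next
    case False
    then have "f i * (h (k - i) * v) \<in> ipow R J (i + Suc (k - i))"
      using h fh_k \<open>v \<in> V1 \<union> V2\<close> by (intro ipow_mult) (auto simp: soc_seqs_def colon_def)
    then show ?thesis
      using \<open>i \<le> k\<close> by (simp add: ac_simps)
  qed
  then have "(\<Sum>i\<le>k. f i * h (k - i)) * v \<in> ipow R J (Suc k)" if "v \<in> V1 \<union> V2" for k v
    unfolding sum_distrib_right using that by (auto intro!: ipow_sum)
  with prod show ?thesis
    by (auto simp: soc_seqs_def colon_def seqring_simps intro: subsetD[OF ipow_subset])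
qed

lemma ideal_prod_Soc_subset:
  assumes "G1 \<subseteq> Soc R V1 J" and "G2 \<subseteq> Soc R V2 J"
  shows "ideal_prod (gr R J) (genideal (gr R J) G1) (genideal (gr R J) G2) \<subseteq> Soc R (V1 \<union> V2) J"
proof
  interpret gr: ring "gr R J"
    by (rule gr_ring)
  have I1: "genideal (gr R J) G1 \<subseteq> Soc R V1 J"
    by (rule gr.genideal_minimal[OF Soc_ideal assms(1)])
  have I2: "genideal (gr R J) G2 \<subseteq> Soc R V2 J"
    by (rule gr.genideal_minimal[OF Soc_ideal assms(2)])
  fix x assume "x \<in> ideal_prod (gr R J) (genideal (gr R J) G1) (genideal (gr R J) G2)"
  then show "x \<in> Soc R (V1 \<union> V2) J"
  proof (induction rule: ideal_prod.induct)
    case (prod i j)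
    then obtain f h where f: "f \<in> soc_seqs R V1 J" "i = gr_class R J f"
      and h: "h \<in> soc_seqs R V2 J" "j = gr_class R J h"
      using I1 I2 unfolding Soc_eq_image by blast
    then have "i \<otimes>\<^bsub>gr R J\<^esub> j = gr_class R J (f \<otimes>\<^bsub>seqring R J\<^esub> h)"
      by (simp add: gr_class_mult soc_seqs_def)
    then show ?case
      unfolding Soc_eq_image using soc_seqs_mult[OF f(1) h(1)] by blast
  next
    case (sum s1 s2)
    then show ?case
      using additive_subgroup.a_closed[OF ideal.axioms(1)[OF Soc_ideal]] by blast
  qed
qed

end

lemma coset_seqring: "H +>\<^bsub>seqring R J\<^esub> f = {(\<lambda>k. h k + f k) | h. h \<in> H}"
  unfolding a_r_coset_def' seqring_simps by blast

lemma gr_map_gr_class: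
  assumes RJ: "subring_ideal R J" and R'J': "subring_ideal R' J'"
    and ipow_le: "\<And>k. ipow R' J' k \<subseteq> ipow R J k"
  shows "gr_map R J (gr_class R' J' f) = gr_class R J f"
proof -
  have N_add: "(\<lambda>k. a k + b k) \<in> grN R J" if "a \<in> grN R J" "b \<in> grN R J" for a b
    using additive_subgroup.a_closed[OF ideal.axioms(1)[OF subring_ideal.grN_ideal[OF RJ]] that]
    by (simp add: seqring_simps)
  have N'_sub: "h \<in> grN R J" if "h \<in> grN R' J'" for h
  proof -
    have "\<forall>k. h k \<in> ipow R' J' k \<and> h k \<in> ipow R' J' (Suc k)" "finite {k. h k \<noteq> 0}"
      using that by (simp_all add: grN_def seqring_simps)
    then show ?thesis
      using ipow_le by (simp add: grN_def seqring_simps) (meson subsetD)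
  qed
  have zero: "(\<lambda>k. 0) \<in> grN R' J'"
    by (simp add: grN_def seqring_simps subring_ideal.ipow_zero[OF R'J'])
  show ?thesis
    unfolding gr_map_def coset_seqring
  proof (intro equalityI subsetI)
    fix x assume "x \<in> (\<Union>g\<in>{\<lambda>k. h k + f k |h. h \<in> grN R' J'}. {\<lambda>k. h k + g k |h. h \<in> grN R J})"
    then obtain h h' where h: "h \<in> grN R' J'" "h' \<in> grN R J" and x: "x = (\<lambda>k. h' k + (h k + f k))"
      by blast
    have hN: "(\<lambda>k. h' k + h k) \<in> grN R J"
      using N_add[OF h(2) N'_sub[OF h(1)]] .
    show "x \<in> {\<lambda>k. h k + f k |h. h \<in> grN R J}"
      unfolding x by (intro CollectI exI[of _ "\<lambda>k. h' k + h k"]) (simp add: hN add.assoc)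
  next
    fix x assume "x \<in> {\<lambda>k. h k + f k |h. h \<in> grN R J}"
    moreover have "f \<in> {\<lambda>k. h k + f k |h. h \<in> grN R' J'}"
      using zero by force
    ultimately show "x \<in> (\<Union>g\<in>{\<lambda>k. h k + f k |h. h \<in> grN R' J'}. {\<lambda>k. h k + g k |h. h \<in> grN R J})"
      by blast
  qed
qed

lemma soc_seqs_mono:
  assumes "\<And>k. ipow R' J' k \<subseteq> ipow R J k"
  shows "soc_seqs R' n J' \<subseteq> soc_seqs R n J"
proof -
  have "R' \<subseteq> R"
    using assms[of 0] by simp
  then show ?thesis
    using assms unfolding soc_seqs_def seqring_simps colon_def by blast
qed

lemma gr_map_Soc_subset:
  assumes "subring_ideal R J" and "subring_ideal R' J'" and "\<And>k. ipow R' J' k \<subseteq> ipow R J k"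
  shows "gr_map R J ` Soc R' n J' \<subseteq> Soc R n J"
  unfolding Soc_eq_image image_image gr_map_gr_class[OF assms]
  by (rule image_mono[OF soc_seqs_mono[OF assms(3)]])

section \<open>Polynomial rings and monomial ideals\<close>

lemma polyring_add: "p \<in> polyring V \<Longrightarrow> q \<in> polyring V \<Longrightarrow> p + q \<in> polyring V"
  unfolding polyring_def using keys_add[of p q] by auto

lemma polyring_mult:
  assumes "p \<in> polyring V" and "q \<in> polyring V"
  shows "p * q \<in> polyring V"
  unfolding polyring_def
proof (intro CollectI ballI)
  fix a assume "a \<in> Poly_Mapping.keys (p * q)"
  then obtain b c where "a = b + c" "b \<in> Poly_Mapping.keys p" "c \<in> Poly_Mapping.keys q"
    using keys_mult[of p q] by blast
  then show "Poly_Mapping.keys a \<subseteq> V"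
    using assms keys_add[of b c] unfolding polyring_def by blast
qed

lemma is_subring_polyring: "is_subring (polyring V)"
proof -
  have "0 \<in> polyring V" "1 \<in> polyring V" "\<And>p. p \<in> polyring V \<Longrightarrow> - p \<in> polyring V"
    by (simp_all add: polyring_def)
  then show ?thesis
    unfolding is_subring_def using polyring_add polyring_mult by blast
qed

lemma single_in_polyring: "Poly_Mapping.keys a \<subseteq> V \<Longrightarrow> Poly_Mapping.single a c \<in> polyring V"
  unfolding polyring_def by auto

lemma Var_in_polyring: "i \<in> V \<Longrightarrow> Var i \<in> polyring V"
  unfolding Var_def by (rule single_in_polyring) simp

lemma polyring_mono: "V \<subseteq> W \<Longrightarrow> polyring V \<subseteq> polyring W"
  unfolding polyring_def by auto

lemma Soc_max_graded:
  assumes "is_ideal (polyring V) J"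
  shows "Soc (polyring V) (max_graded V) J = Soc (polyring V) (Var ` V) J"
proof -
  interpret subring_ideal "polyring V" J
    using is_subring_polyring assms by unfold_locales
  have "colon (polyring V) (ipow (polyring V) J (Suc k)) (max_graded V) =
      colon (polyring V) (ipow (polyring V) J (Suc k)) (Var ` V)" for k
    unfolding max_graded_def
    by (rule colon_ideal_in[OF is_subring_polyring ipow_ideal]) (auto intro: Var_in_polyring)
  then show ?thesis
    unfolding Soc_def by simp
qed

(* Divisibility of monomials x^e | x^a is the pointwise order of the exponent functions. *)
definition monideal :: "nat set \<Rightarrow> (nat \<Rightarrow>\<^sub>0 nat) set \<Rightarrow> 'k::field mpol set" where
  "monideal V E = {p \<in> polyring V.
    \<forall>a\<in>Poly_Mapping.keys p. \<exists>e\<in>E. Poly_Mapping.lookup e \<le> Poly_Mapping.lookup a}"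

lemma single_in_monideal_iff:
  "c \<noteq> 0 \<Longrightarrow> Poly_Mapping.single a c \<in> monideal V E \<longleftrightarrow>
    Poly_Mapping.keys a \<subseteq> V \<and> (\<exists>e\<in>E. Poly_Mapping.lookup e \<le> Poly_Mapping.lookup a)"
  unfolding monideal_def polyring_def by simp

lemma monideal_is_ideal: "is_ideal (polyring V) (monideal V E)"
  unfolding is_ideal_def
proof (intro conjI ballI subsetI)
  show "0 \<in> monideal V E"
    by (simp add: monideal_def polyring_def)
  fix p assume p: "p \<in> monideal V E"
  then show "p \<in> polyring V"
    by (simp add: monideal_def)
  show "p + q \<in> monideal V E" if q: "q \<in> monideal V E" for q
    using p q keys_add[of p q] polyring_add[of p V q] unfolding monideal_def by blast
  show "r * p \<in> monideal V E" if r: "r \<in> polyring V" for r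
  proof -
    have "\<exists>e\<in>E. Poly_Mapping.lookup e \<le> Poly_Mapping.lookup (b + c)" if "c \<in> Poly_Mapping.keys p" for b c
      using p that lookup_le_add[of c b] unfolding monideal_def
      by (auto simp: add.commute intro: order_trans)
    then show ?thesis
      using p r keys_mult[of r p] polyring_mult[of r V p] unfolding monideal_def by blast
  qed
qed

lemma monideal_subset:
  fixes T :: "'k::field mpol set"
  assumes T: "is_ideal (polyring V) T"
    and E: "\<And>e. e \<in> E \<Longrightarrow> Poly_Mapping.keys e \<subseteq> V \<Longrightarrow> Poly_Mapping.single e 1 \<in> T"
  shows "monideal V E \<subseteq> T"
proof
  fix p :: "'k mpol" assume p: "p \<in> monideal V E"
  have "Poly_Mapping.single a (Poly_Mapping.lookup p a) \<in> T" if a: "a \<in> Poly_Mapping.keys p" for a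
  proof -
    obtain e where e: "e \<in> E" "Poly_Mapping.lookup e \<le> Poly_Mapping.lookup a"
      using p a unfolding monideal_def by blast
    have aV: "Poly_Mapping.keys a \<subseteq> V"
      using p a unfolding monideal_def polyring_def by blast
    have "Poly_Mapping.single (a - e) (Poly_Mapping.lookup p a) * Poly_Mapping.single e 1 \<in> T"
      using aV keys_mono_lookup_le[OF e(2)] E[OF e(1)] T
      by (intro ideal_mult_left[OF T] single_in_polyring) (auto simp: in_keys_iff lookup_minus)
    moreover have "a - e + e = a"
      using e(2) by (intro poly_mapping_eqI) (simp add: lookup_add lookup_minus le_fun_def)
    ultimately show ?thesis
      by (simp add: mult_single)
  qed
  then show "p \<in> T"
    by (subst poly_mapping_sum_single) (rule is_ideal_sum[OF T])
qed

lemma monideal_mult: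
  assumes p: "p \<in> monideal V A" and q: "q \<in> monideal V B"
  shows "p * q \<in> monideal V {a + b | a b. a \<in> A \<and> b \<in> B}"
  unfolding monideal_def
proof (intro CollectI conjI ballI)
  show "p * q \<in> polyring V"
    using p q polyring_mult unfolding monideal_def by blast
  fix x assume "x \<in> Poly_Mapping.keys (p * q)"
  then obtain b c where bc: "x = b + c" "b \<in> Poly_Mapping.keys p" "c \<in> Poly_Mapping.keys q"
    using keys_mult[of p q] by blast
  obtain e1 where "e1 \<in> A" "Poly_Mapping.lookup e1 \<le> Poly_Mapping.lookup b"
    using p bc unfolding monideal_def by blast
  moreover obtain e2 where "e2 \<in> B" "Poly_Mapping.lookup e2 \<le> Poly_Mapping.lookup c"
    using q bc unfolding monideal_def by blast
  ultimately show "\<exists>e\<in>{a + b | a b. a \<in> A \<and> b \<in> B}. Poly_Mapping.lookup e \<le> Poly_Mapping.lookup x"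
    unfolding bc(1) by (blast intro: lookup_add_mono)
qed

lemma monideal_mono:
  assumes "V \<subseteq> W" and "\<And>e. e \<in> A \<Longrightarrow> \<exists>e'\<in>B. Poly_Mapping.lookup e' \<le> Poly_Mapping.lookup e"
  shows "monideal V A \<subseteq> monideal W B"
  using assms polyring_mono unfolding monideal_def by (blast intro: order_trans)

primrec ksum :: "(nat \<Rightarrow>\<^sub>0 nat) set \<Rightarrow> nat \<Rightarrow> (nat \<Rightarrow>\<^sub>0 nat) set" where
  "ksum E 0 = {0}"
| "ksum E (Suc k) = {e + f | e f. e \<in> ksum E k \<and> f \<in> E}"

lemma ksum_add: "e1 \<in> ksum E i \<Longrightarrow> e2 \<in> ksum E j \<Longrightarrow> e1 + e2 \<in> ksum E (i + j)"
proof (induction j arbitrary: e2)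
  case (Suc j)
  then obtain e f where "e2 = e + f" "e \<in> ksum E j" "f \<in> E"
    by auto
  with Suc.IH[of e] Suc.prems(1) show ?case
    by (auto simp: add.assoc[symmetric])
qed simp

lemma ksum_mono: "A \<subseteq> B \<Longrightarrow> ksum A k \<subseteq> ksum B k"
  by (induction k) auto

lemma ksum_keys:
  "\<forall>e\<in>E. Poly_Mapping.keys e \<subseteq> V \<Longrightarrow> e \<in> ksum E k \<Longrightarrow> Poly_Mapping.keys e \<subseteq> V"
  by (induction k arbitrary: e) (simp, fastforce simp: keys_add_nat)

lemma ksum_Un:
  "e \<in> ksum (A \<union> B) j \<longleftrightarrow> (\<exists>c d e1 e2. c + d = j \<and> e1 \<in> ksum A c \<and> e2 \<in> ksum B d \<and> e = e1 + e2)"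
proof
  show "\<exists>c d e1 e2. c + d = j \<and> e1 \<in> ksum A c \<and> e2 \<in> ksum B d \<and> e = e1 + e2"
    if "e \<in> ksum (A \<union> B) j"
    using that
  proof (induction j arbitrary: e)
    case (Suc j)
    then obtain e' f where e: "e = e' + f" "e' \<in> ksum (A \<union> B) j" "f \<in> A \<union> B"
      by auto
    then obtain c d e1 e2 where cd: "c + d = j" "e1 \<in> ksum A c" "e2 \<in> ksum B d" "e' = e1 + e2"
      using Suc.IH by blast
    show ?case
    proof (cases "f \<in> A")
      case True
      then have "e1 + f \<in> ksum A (Suc c)" "e = (e1 + f) + e2"
        using e cd by (auto simp: ac_simps)
      then show ?thesis
        using cd by (intro exI[of _ "Suc c"] exI[of _ d]) auto
    next
      case False
      then have "e2 + f \<in> ksum B (Suc d)" "e = e1 + (e2 + f)"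
        using e cd by (auto simp: ac_simps)
      then show ?thesis
        using cd by (intro exI[of _ c] exI[of _ "Suc d"]) auto
    qed
  qed simp
next
  assume "\<exists>c d e1 e2. c + d = j \<and> e1 \<in> ksum A c \<and> e2 \<in> ksum B d \<and> e = e1 + e2"
  then show "e \<in> ksum (A \<union> B) j"
    using ksum_add ksum_mono[of A "A \<union> B"] ksum_mono[of B "A \<union> B"] by blast
qed

definition ksum_divides :: "(nat \<Rightarrow>\<^sub>0 nat) set \<Rightarrow> nat \<Rightarrow> (nat \<Rightarrow>\<^sub>0 nat) \<Rightarrow> bool" where
  "ksum_divides E k a \<longleftrightarrow> (\<exists>e\<in>ksum E k. Poly_Mapping.lookup e \<le> Poly_Mapping.lookup a)"

lemma ksum_divides_le_degree: "ksum_divides E k a \<Longrightarrow> j \<le> k \<Longrightarrow> ksum_divides E j a"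
proof (induction k)
  case (Suc k)
  show ?case
  proof (cases "j = Suc k")
    case False
    obtain e f where "e \<in> ksum E k" "f \<in> E" "Poly_Mapping.lookup (e + f) \<le> Poly_Mapping.lookup a"
      using Suc.prems(1) unfolding ksum_divides_def by auto
    then have "ksum_divides E k a"
      unfolding ksum_divides_def using lookup_le_add[of e f] by (blast intro: order_trans)
    with False Suc.prems(2) show ?thesis
      by (intro Suc.IH) auto
  qed (use Suc.prems in simp)
qed simp

lemma ipow_monideal: "ipow (polyring V) (monideal V E) k = monideal V (ksum E k)"
proof (induction k)
  case 0
  show ?case
    by (auto simp: monideal_def le_fun_def)
next
  case (Suc k)
  define G :: "'a mpol set" where "G = {a * b | a b. a \<in> monideal V (ksum E k) \<and> b \<in> monideal V E}"
  have ipow_Suc: "ipow (polyring V) (monideal V E) (Suc k) = ideal_in (polyring V) G"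
    unfolding G_def Suc[symmetric] ipow.simps(2) ..
  have G_sub: "G \<subseteq> polyring V"
    unfolding G_def monideal_def using polyring_mult by blast
  show ?case
    unfolding ipow_Suc
  proof
    show "ideal_in (polyring V) G \<subseteq> monideal V (ksum E (Suc k))"
      by (rule ideal_in_subset[OF monideal_is_ideal]) (auto simp: G_def dest: monideal_mult)
    show "monideal V (ksum E (Suc k)) \<subseteq> ideal_in (polyring V) G"
    proof (rule monideal_subset[OF is_ideal_ideal_in[OF is_subring_polyring G_sub]])
      fix e assume "e \<in> ksum E (Suc k)" and eV: "Poly_Mapping.keys e \<subseteq> V"
      then obtain e1 f where ef: "e = e1 + f" "e1 \<in> ksum E k" "f \<in> E"
        by auto
      have "Poly_Mapping.keys e1 \<subseteq> V" "Poly_Mapping.keys f \<subseteq> V"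
        using eV unfolding ef(1) keys_add_nat by simp_all
      then have "Poly_Mapping.single e1 1 \<in> monideal V (ksum E k)"
          "Poly_Mapping.single f 1 \<in> monideal V E"
        using ef(2,3) by (auto simp: single_in_monideal_iff)
      then have "Poly_Mapping.single e1 1 * Poly_Mapping.single f 1 \<in> G"
        unfolding G_def by blast
      then show "Poly_Mapping.single e 1 \<in> ideal_in (polyring V) G"
        unfolding ef(1) by (simp add: mult_single ideal_in_base[OF is_subring_polyring])
    qed
  qed
qed

lemma mem_ipow_monideal_iff:
  "p \<in> ipow (polyring V) (monideal V E) k \<longleftrightarrow>
    p \<in> polyring V \<and> (\<forall>a\<in>Poly_Mapping.keys p. ksum_divides E k a)"
  unfolding ipow_monideal by (simp add: monideal_def ksum_divides_def)

lemma single_mem_ipow_monideal_iff: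
  "c \<noteq> 0 \<Longrightarrow> Poly_Mapping.single a c \<in> ipow (polyring V) (monideal V E) k \<longleftrightarrow>
    Poly_Mapping.keys a \<subseteq> V \<and> ksum_divides E k a"
  unfolding mem_ipow_monideal_iff by (simp add: polyring_def)

lemma subring_ideal_monideal: "subring_ideal (polyring V) (monideal V E)"
  by unfold_locales (rule is_subring_polyring, rule monideal_is_ideal)

lemma ipow_monideal_mono:
  "V \<subseteq> W \<Longrightarrow> A \<subseteq> B \<Longrightarrow> ipow (polyring V) (monideal V A) k \<subseteq> ipow (polyring W) (monideal W B) k"
  unfolding ipow_monideal by (rule monideal_mono) (assumption, metis ksum_mono order_refl subsetD)

lemma monomial_idealE:
  assumes "monomial_ideal V (J :: 'k::field mpol set)"
  obtains E where "\<forall>e\<in>E. Poly_Mapping.keys e \<subseteq> V" and "J = monideal V E"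
proof -
  obtain G where G: "G \<subseteq> polyring V" "\<forall>g\<in>G. is_monomial g" "J = ideal_in (polyring V) G"
    using assms unfolding monomial_ideal_def by blast
  define E where "E = {a. Poly_Mapping.single a (1::'k) \<in> G}"
  have E_keys: "Poly_Mapping.keys e \<subseteq> V" if "e \<in> E" for e
  proof -
    have "Poly_Mapping.single e (1::'k) \<in> polyring V"
      using that G(1) unfolding E_def by blast
    then show ?thesis
      by (simp add: polyring_def)
  qed
  have G_eq: "G = (\<lambda>e. Poly_Mapping.single e 1) ` E"
    using G(2) unfolding E_def is_monomial_def by auto
  have "ideal_in (polyring V) G = monideal V E"
  proof
    show "ideal_in (polyring V) G \<subseteq> monideal V E"
      by (rule ideal_in_subset[OF monideal_is_ideal]) (auto simp: G_eq single_in_monideal_iff E_keys)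
    show "monideal V E \<subseteq> ideal_in (polyring V) G"
      by (rule monideal_subset[OF is_ideal_ideal_in[OF is_subring_polyring G(1)]])
        (auto simp: G_eq intro: ideal_in_base[OF is_subring_polyring])
  qed
  then show thesis
    using that E_keys G(3) by blast
qed

lemma ideal_in_Un_monideal:
  assumes E1_keys: "\<forall>e\<in>E1. Poly_Mapping.keys e \<subseteq> X" and E2_keys: "\<forall>e\<in>E2. Poly_Mapping.keys e \<subseteq> Y"
  shows "ideal_in (polyring (X \<union> Y)) (monideal X E1 \<union> monideal Y E2) =
    (monideal (X \<union> Y) (E1 \<union> E2) :: 'k::field mpol set)"
    (is "ideal_in _ ?G = ?I")
proof
  have sub: "?G \<subseteq> ?I"
    using monideal_mono[of X "X \<union> Y" E1 "E1 \<union> E2"] monideal_mono[of Y "X \<union> Y" E2 "E1 \<union> E2"] by blast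
  then show "ideal_in (polyring (X \<union> Y)) ?G \<subseteq> ?I"
    by (rule ideal_in_subset[OF monideal_is_ideal])
  have "?G \<subseteq> polyring (X \<union> Y)"
    using sub ideal_subset[OF monideal_is_ideal] by blast
  then show "?I \<subseteq> ideal_in (polyring (X \<union> Y)) ?G"
    by (rule monideal_subset[OF is_ideal_ideal_in[OF is_subring_polyring]])
      (use E1_keys E2_keys in
        \<open>auto intro!: ideal_in_base[OF is_subring_polyring] simp: single_in_monideal_iff\<close>)
qed

lemma mult_Var_ksum_divides:
  assumes "p * Var i \<in> ipow (polyring V) (monideal V E) k" and "a \<in> Poly_Mapping.keys p"
  shows "ksum_divides E k (a + Poly_Mapping.single i 1)"
proof -
  have "Poly_Mapping.lookup (p * Var i) (a + Poly_Mapping.single i 1) = Poly_Mapping.lookup p a"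
    unfolding Var_def by (rule lookup_mult_single_add)
  then have "a + Poly_Mapping.single i 1 \<in> Poly_Mapping.keys (p * Var i)"
    using assms(2) by (simp add: in_keys_iff)
  then show ?thesis
    using assms(1) by (simp add: mem_ipow_monideal_iff)
qed

lemma single_in_colon_Var:
  assumes "c \<noteq> 0" and "Poly_Mapping.keys a \<subseteq> V"
    and "\<And>i. i \<in> V \<Longrightarrow> ksum_divides E (Suc k) (a + Poly_Mapping.single i 1)"
  shows "Poly_Mapping.single a c \<in>
    colon (polyring V) (ipow (polyring V) (monideal V E) (Suc k)) (Var ` V)"
  using assms by (auto simp: colon_def Var_def mult_single single_mem_ipow_monideal_iff keys_add_nat
      intro: single_in_polyring)

section \<open>Socles of monomial ideals in disjoint sets of variables\<close>

locale monomial_ideal_pair =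
  fixes X Y :: "nat set" and E1 E2 :: "(nat \<Rightarrow>\<^sub>0 nat) set"
  assumes disjoint: "X \<inter> Y = {}"
    and E1_keys: "\<forall>e\<in>E1. Poly_Mapping.keys e \<subseteq> X" and E2_keys: "\<forall>e\<in>E2. Poly_Mapping.keys e \<subseteq> Y"
begin

lemma ksum_divides_Un_iff:
  assumes a: "Poly_Mapping.keys a \<subseteq> X" and b: "Poly_Mapping.keys b \<subseteq> Y"
  shows "ksum_divides (E1 \<union> E2) j (a + b) \<longleftrightarrow>
    (\<exists>c d. c + d = j \<and> ksum_divides E1 c a \<and> ksum_divides E2 d b)"
proof
  assume "ksum_divides (E1 \<union> E2) j (a + b)"
  then obtain c d e1 e2 where cd: "c + d = j" "e1 \<in> ksum E1 c" "e2 \<in> ksum E2 d"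
    and le: "Poly_Mapping.lookup (e1 + e2) \<le> Poly_Mapping.lookup (a + b)"
    unfolding ksum_divides_def Bex_def ksum_Un by blast
  have "Poly_Mapping.keys e1 \<subseteq> X" "Poly_Mapping.keys e2 \<subseteq> Y"
    using ksum_keys[OF E1_keys cd(2)] ksum_keys[OF E2_keys cd(3)] .
  with le have "Poly_Mapping.lookup e1 \<le> Poly_Mapping.lookup a \<and>
      Poly_Mapping.lookup e2 \<le> Poly_Mapping.lookup b"
    using lookup_le_split[OF disjoint] a b by blast
  with cd show "\<exists>c d. c + d = j \<and> ksum_divides E1 c a \<and> ksum_divides E2 d b"
    unfolding ksum_divides_def by blast
next
  assume "\<exists>c d. c + d = j \<and> ksum_divides E1 c a \<and> ksum_divides E2 d b"
  then show "ksum_divides (E1 \<union> E2) j (a + b)"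
    unfolding ksum_divides_def Bex_def ksum_Un by (blast intro: lookup_add_mono)
qed

lemma ksum_divides_socle_part:
  assumes a: "Poly_Mapping.keys a \<subseteq> X" and b: "Poly_Mapping.keys b \<subseteq> Y"
    and a_div: "ksum_divides E1 \<alpha> a"
    and not_next: "\<not> ksum_divides (E1 \<union> E2) (Suc (\<alpha> + \<beta>)) (a + b)"
    and i: "i \<in> X"
    and times_var: "ksum_divides (E1 \<union> E2) (Suc (\<alpha> + \<beta>)) (a + b + Poly_Mapping.single i 1)"
  shows "ksum_divides E1 (Suc \<alpha>) (a + Poly_Mapping.single i 1)"
proof -
  have b_not_next: "\<not> ksum_divides E2 (Suc \<beta>) b"
    using not_next a_div ksum_divides_Un_iff[OF a b, of "Suc (\<alpha> + \<beta>)"] by auto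
  have "Poly_Mapping.keys (a + Poly_Mapping.single i 1) \<subseteq> X"
    using a i by (simp add: keys_add_nat)
  moreover have "a + b + Poly_Mapping.single i 1 = (a + Poly_Mapping.single i 1) + b"
    by (simp add: ac_simps)
  ultimately obtain c d where cd: "c + d = Suc (\<alpha> + \<beta>)" "ksum_divides E1 c (a + Poly_Mapping.single i 1)"
    and "ksum_divides E2 d b"
    using times_var ksum_divides_Un_iff[OF _ b] by auto
  then have "d \<le> \<beta>"
    using b_not_next ksum_divides_le_degree not_less_eq_eq by blast
  then show ?thesis
    using cd ksum_divides_le_degree[OF cd(2)] by simp
qed

lemma socle_monomial_factor:
  assumes w: "Poly_Mapping.keys w \<subseteq> X \<union> Y" "ksum_divides (E1 \<union> E2) k w"
    and not_next: "\<not> ksum_divides (E1 \<union> E2) (Suc k) w"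
    and times_var: "\<And>i. i \<in> X \<union> Y \<Longrightarrow> ksum_divides (E1 \<union> E2) (Suc k) (w + Poly_Mapping.single i 1)"
  obtains \<alpha> \<beta> a b where "\<alpha> + \<beta> = k" and "w = a + b"
    and "Poly_Mapping.keys a \<subseteq> X" "ksum_divides E1 \<alpha> a"
      "\<And>i. i \<in> X \<Longrightarrow> ksum_divides E1 (Suc \<alpha>) (a + Poly_Mapping.single i 1)"
    and "Poly_Mapping.keys b \<subseteq> Y" "ksum_divides E2 \<beta> b"
      "\<And>i. i \<in> Y \<Longrightarrow> ksum_divides E2 (Suc \<beta>) (b + Poly_Mapping.single i 1)"
proof -
  interpret swapped: monomial_ideal_pair Y X E2 E1
    using disjoint E1_keys E2_keys by unfold_locales auto
  obtain a b where w_eq: "w = a + b" and a: "Poly_Mapping.keys a \<subseteq> X" and b: "Poly_Mapping.keys b \<subseteq> Y"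
    using poly_mapping_split_keys[OF w(1)] .
  then obtain \<alpha> \<beta> where k: "\<alpha> + \<beta> = k" and a_div: "ksum_divides E1 \<alpha> a" and b_div: "ksum_divides E2 \<beta> b"
    using w(2) ksum_divides_Un_iff[OF a b] by blast
  have "ksum_divides E1 (Suc \<alpha>) (a + Poly_Mapping.single i 1)" if "i \<in> X" for i
    using ksum_divides_socle_part[OF a b a_div, of \<beta> i] not_next times_var[of i] that
    by (simp add: w_eq k)
  moreover have "ksum_divides E2 (Suc \<beta>) (b + Poly_Mapping.single i 1)" if "i \<in> Y" for i
    using swapped.ksum_divides_socle_part[OF b a b_div, of \<alpha> i] not_next times_var[of i] that
    by (simp add: w_eq k Un_commute add.commute add.left_commute)
  ultimately show thesis
    using that k w_eq a a_div b b_div by blast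
qed

lemma soc_term_cases:
  fixes f :: "nat \<Rightarrow> 'k::field mpol"
  defines "S \<equiv> polyring (X \<union> Y)" and "I \<equiv> monideal (X \<union> Y) (E1 \<union> E2) :: 'k mpol set"
  assumes f: "f \<in> soc_seqs S (Var ` (X \<union> Y)) I" and w: "w \<in> Poly_Mapping.keys (f k)"
  obtains "seq_at k (Poly_Mapping.single w (Poly_Mapping.lookup (f k) w)) \<in> grN S I"
  | F H where "F \<in> soc_seqs (polyring X) (Var ` X) (monideal X E1)"
    and "H \<in> soc_seqs (polyring Y) (Var ` Y) (monideal Y E2)"
    and "seq_at k (Poly_Mapping.single w (Poly_Mapping.lookup (f k) w)) = F \<otimes>\<^bsub>seqring S I\<^esub> H"
proof -
  interpret subring_ideal S I
    unfolding S_def I_def by (rule subring_ideal_monideal)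
  define c where "c = Poly_Mapping.lookup (f k) w"
  have c: "c \<noteq> 0"
    using w by (simp add: c_def in_keys_iff)
  have fk: "f k \<in> ipow S I k" and times_var: "\<And>i. i \<in> X \<union> Y \<Longrightarrow> f k * Var i \<in> ipow S I (Suc k)"
    using f by (auto simp: soc_seqs_def seqring_simps colon_def)
  have w_keys: "Poly_Mapping.keys w \<subseteq> X \<union> Y" and w_div: "ksum_divides (E1 \<union> E2) k w"
    using fk w unfolding S_def I_def mem_ipow_monideal_iff by (auto simp: polyring_def)
  show thesis
  proof (cases "ksum_divides (E1 \<union> E2) (Suc k) w")
    case True
    then have "Poly_Mapping.single w c \<in> ipow S I (Suc k)"
      using c w_keys by (simp add: S_def I_def single_mem_ipow_monideal_iff)
    then show thesis
      unfolding c_def by (intro that(1) seq_at_in_grN)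
  next
    case False
    have "ksum_divides (E1 \<union> E2) (Suc k) (w + Poly_Mapping.single i 1)" if "i \<in> X \<union> Y" for i
      using mult_Var_ksum_divides[OF times_var[OF that, unfolded S_def I_def] w] .
    then obtain \<alpha> \<beta> a b where k: "\<alpha> + \<beta> = k" and w_eq: "w = a + b"
      and a: "Poly_Mapping.keys a \<subseteq> X" "ksum_divides E1 \<alpha> a"
        "\<And>i. i \<in> X \<Longrightarrow> ksum_divides E1 (Suc \<alpha>) (a + Poly_Mapping.single i 1)"
      and b: "Poly_Mapping.keys b \<subseteq> Y" "ksum_divides E2 \<beta> b"
        "\<And>i. i \<in> Y \<Longrightarrow> ksum_divides E2 (Suc \<beta>) (b + Poly_Mapping.single i 1)"
      using socle_monomial_factor[OF w_keys w_div False] by blast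
    show thesis
    proof (rule that(2))
      show "seq_at \<alpha> (Poly_Mapping.single a c) \<in> soc_seqs (polyring X) (Var ` X) (monideal X E1)"
        using c a single_in_colon_Var[OF c a(1), of E1 \<alpha>]
        by (intro subring_ideal.seq_at_in_soc_seqs[OF subring_ideal_monideal])
          (simp_all add: single_mem_ipow_monideal_iff)
      show "seq_at \<beta> (Poly_Mapping.single b 1) \<in> soc_seqs (polyring Y) (Var ` Y) (monideal Y E2)"
        using b single_in_colon_Var[of 1 b Y E2 \<beta>]
        by (intro subring_ideal.seq_at_in_soc_seqs[OF subring_ideal_monideal])
          (simp_all add: single_mem_ipow_monideal_iff)
      show "seq_at k (Poly_Mapping.single w (Poly_Mapping.lookup (f k) w)) =
          seq_at \<alpha> (Poly_Mapping.single a c) \<otimes>\<^bsub>seqring S I\<^esub> seq_at \<beta> (Poly_Mapping.single b 1)"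
        by (simp add: seq_at_mult mult_single k w_eq c_def)
    qed
  qed
qed

lemma Soc_subset_ideal_of_products:
  fixes T :: "(nat \<Rightarrow> 'k::field mpol) set set"
  defines "S \<equiv> polyring (X \<union> Y)" and "I \<equiv> monideal (X \<union> Y) (E1 \<union> E2) :: 'k mpol set"
  assumes T: "ideal T (gr S I)"
    and products: "\<And>F H. F \<in> soc_seqs (polyring X) (Var ` X) (monideal X E1) \<Longrightarrow>
      H \<in> soc_seqs (polyring Y) (Var ` Y) (monideal Y E2) \<Longrightarrow> gr_class S I (F \<otimes>\<^bsub>seqring S I\<^esub> H) \<in> T"
  shows "Soc S (Var ` (X \<union> Y)) I \<subseteq> T"
proof
  interpret subring_ideal S I
    unfolding S_def I_def by (rule subring_ideal_monideal)
  interpret seqring: cring "seqring S I"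
    by (rule seqring_cring)
  have T_zero: "\<zero>\<^bsub>gr S I\<^esub> \<in> T" and T_add: "\<And>A B. A \<in> T \<Longrightarrow> B \<in> T \<Longrightarrow> A \<oplus>\<^bsub>gr S I\<^esub> B \<in> T"
    using ideal.axioms(1)[OF T]
    by (simp_all add: additive_subgroup.zero_closed additive_subgroup.a_closed)
  have soc_carrier: "soc_seqs (polyring V) n (monideal V E) \<subseteq> carrier (seqring S I)"
    if "V \<subseteq> X \<union> Y" "E \<subseteq> E1 \<union> E2" for V n E
    using soc_seqs_mono[OF ipow_monideal_mono[OF that]] unfolding S_def I_def soc_seqs_def by blast
  have atom: "seq_at k (Poly_Mapping.single w (Poly_Mapping.lookup (f k) w)) \<in> carrier (seqring S I) \<and>
      gr_class S I (seq_at k (Poly_Mapping.single w (Poly_Mapping.lookup (f k) w))) \<in> T"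
    if f: "f \<in> soc_seqs S (Var ` (X \<union> Y)) I" and w: "w \<in> Poly_Mapping.keys (f k)" for f k w
  proof (cases rule: soc_term_cases[OF f[unfolded S_def I_def] w])
    case 1
    then show ?thesis
      using gr_class_eq_zero T_zero by (simp add: S_def I_def grN_def)
  next
    case (2 F H)
    have "F \<in> carrier (seqring S I)" "H \<in> carrier (seqring S I)"
      using 2(1,2) soc_carrier[of X E1] soc_carrier[of Y E2] by auto
    then show ?thesis
      using 2(3) products[OF 2(1,2)] seqring.m_closed by (simp add: S_def I_def)
  qed
  fix C assume "C \<in> Soc S (Var ` (X \<union> Y)) I"
  then obtain f where f: "f \<in> soc_seqs S (Var ` (X \<union> Y)) I" and C: "C = gr_class S I f"
    unfolding Soc_eq_image by blast
  have "f \<in> carrier (seqring S I) \<and> gr_class S I f \<in> T"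
  proof (induction rule: finite_support_seq_induct)
    show "finite {k. f k \<noteq> 0}"
      using f by (simp add: soc_seqs_def seqring_simps)
    have "(\<lambda>k. 0) \<in> grN S I"
      by (simp add: grN_def seqring_simps)
    then show "(\<lambda>k. 0) \<in> carrier (seqring S I) \<and> gr_class S I (\<lambda>k. 0) \<in> T"
      using gr_class_eq_zero T_zero by (simp add: grN_def)
  next
    fix g h
    assume "g \<in> carrier (seqring S I) \<and> gr_class S I g \<in> T"
      and "h \<in> carrier (seqring S I) \<and> gr_class S I h \<in> T"
    then show "(\<lambda>k. g k + h k) \<in> carrier (seqring S I) \<and> gr_class S I (\<lambda>k. g k + h k) \<in> T"
      using seqring.add.m_closed[of g h] gr_class_add[of g h, symmetric] T_add
      by (simp add: seqring_simps)
  qed (rule atom[OF f])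
  then show "C \<in> T"
    using C by simp
qed

lemma Soc_monideal_Un:
  defines "S \<equiv> polyring (X \<union> Y)" and "I \<equiv> monideal (X \<union> Y) (E1 \<union> E2) :: 'k::field mpol set"
  shows "Soc S (Var ` (X \<union> Y)) I =
    ideal_prod (gr S I)
      (genideal (gr S I) (gr_map S I ` Soc (polyring X) (Var ` X) (monideal X E1)))
      (genideal (gr S I) (gr_map S I ` Soc (polyring Y) (Var ` Y) (monideal Y E2)))"
    (is "_ = ideal_prod _ (genideal _ ?G1) (genideal _ ?G2)")
proof
  have SI: "subring_ideal S I"
    unfolding S_def I_def by (rule subring_ideal_monideal)
  interpret subring_ideal S I
    by (rule SI)
  interpret gr: ring "gr S I"
    by (rule gr_ring)
  have ipow_le: "ipow (polyring V) (monideal V E) k \<subseteq> ipow S I k"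
    if "V \<subseteq> X \<union> Y" "E \<subseteq> E1 \<union> E2" for V E k
    unfolding S_def I_def by (rule ipow_monideal_mono[OF that])
  have G1: "?G1 \<subseteq> Soc S (Var ` X) I" and G2: "?G2 \<subseteq> Soc S (Var ` Y) I"
    by (rule gr_map_Soc_subset[OF SI subring_ideal_monideal ipow_le]; auto)+
  then have G1_carrier: "?G1 \<subseteq> carrier (gr S I)" and G2_carrier: "?G2 \<subseteq> carrier (gr S I)"
    using ideal.Icarr[OF Soc_ideal] by blast+
  have class_in_image: "gr_class S I F \<in> gr_map S I ` Soc (polyring V) (Var ` V) (monideal V E)"
    and class_carrier: "F \<in> carrier (seqring S I)"
    if "F \<in> soc_seqs (polyring V) (Var ` V) (monideal V E)" and "V \<subseteq> X \<union> Y" "E \<subseteq> E1 \<union> E2" for F V E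
  proof -
    show "gr_class S I F \<in> gr_map S I ` Soc (polyring V) (Var ` V) (monideal V E)"
      using gr_map_gr_class[OF SI subring_ideal_monideal ipow_le[OF that(2,3)], of F] that(1)
      unfolding Soc_eq_image by (metis image_eqI)
    show "F \<in> carrier (seqring S I)"
      using soc_seqs_mono[OF ipow_le[OF that(2,3)]] that(1) unfolding soc_seqs_def by blast
  qed
  have "ideal (ideal_prod (gr S I) (genideal (gr S I) ?G1) (genideal (gr S I) ?G2)) (gr S I)"
    by (rule gr.ideal_prod_is_ideal[OF gr.genideal_ideal[OF G1_carrier] gr.genideal_ideal[OF G2_carrier]])
  moreover have "gr_class S I (F \<otimes>\<^bsub>seqring S I\<^esub> H) \<in>
      ideal_prod (gr S I) (genideal (gr S I) ?G1) (genideal (gr S I) ?G2)"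
    if F: "F \<in> soc_seqs (polyring X) (Var ` X) (monideal X E1)"
      and H: "H \<in> soc_seqs (polyring Y) (Var ` Y) (monideal Y E2)" for F H
  proof -
    have "gr_class S I (F \<otimes>\<^bsub>seqring S I\<^esub> H) = gr_class S I F \<otimes>\<^bsub>gr S I\<^esub> gr_class S I H"
      using class_carrier[OF F] class_carrier[OF H] by (simp add: gr_class_mult)
    also have "\<dots> \<in> ideal_prod (gr S I) (genideal (gr S I) ?G1) (genideal (gr S I) ?G2)"
      using class_in_image[OF F] class_in_image[OF H]
        gr.genideal_self[OF G1_carrier] gr.genideal_self[OF G2_carrier]
      by (auto intro!: ideal_prod.prod)
    finally show ?thesis .
  qed
  ultimately show "Soc S (Var ` (X \<union> Y)) I \<subseteq>
      ideal_prod (gr S I) (genideal (gr S I) ?G1) (genideal (gr S I) ?G2)"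
    unfolding S_def I_def by (rule Soc_subset_ideal_of_products)
  show "ideal_prod (gr S I) (genideal (gr S I) ?G1) (genideal (gr S I) ?G2) \<subseteq> Soc S (Var ` (X \<union> Y)) I"
    unfolding image_Un by (rule ideal_prod_Soc_subset[OF G1 G2])
qed

end

theorem theorem1p2:
  fixes m n :: nat and I1 I2 :: "'k::field mpol set"
  defines "X \<equiv> {..<m}" and "Y \<equiv> {m..<m+n}"
  defines "S1 \<equiv> polyring X" and "S2 \<equiv> polyring Y" and "S \<equiv> polyring (X \<union> Y)"
  defines "I \<equiv> ideal_in S (I1 \<union> I2)"
  assumes "m \<ge> 1" and "n \<ge> 1"
  assumes "monomial_ideal X I1" and "monomial_ideal Y I2"
  assumes "ratliff S1 I1" and "ratliff S2 I2" and "ratliff S I"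
  shows "Soc S (max_graded (X \<union> Y)) I =
           ideal_prod (gr S I)
             (genideal (gr S I) (gr_map S I ` Soc S1 (max_graded X) I1))
             (genideal (gr S I) (gr_map S I ` Soc S2 (max_graded Y) I2))"
proof -
  obtain E1 where E1: "\<forall>e\<in>E1. Poly_Mapping.keys e \<subseteq> X" "I1 = monideal X E1"
    using monomial_idealE[OF \<open>monomial_ideal X I1\<close>] by blast
  obtain E2 where E2: "\<forall>e\<in>E2. Poly_Mapping.keys e \<subseteq> Y" "I2 = monideal Y E2"
    using monomial_idealE[OF \<open>monomial_ideal Y I2\<close>] by blast
  interpret monomial_ideal_pair X Y E1 E2
    using E1(1) E2(1) by unfold_locales (auto simp: X_def Y_def)
  have I: "I = monideal (X \<union> Y) (E1 \<union> E2)"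
    unfolding I_def S_def E1(2) E2(2) by (rule ideal_in_Un_monideal[OF E1(1) E2(1)])
  show ?thesis
    unfolding S1_def S2_def S_def I E1(2) E2(2)
    using Soc_monideal_Un by (simp add: Soc_max_graded monideal_is_ideal)
qed

end
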